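(* Let $\mathcal{W}$ be an $(\ell-1)$-dimensional vector space over a field of prime characteristic $\ell \ge 5$, and let $A$ be a unipotent linear operator on $\mathcal{W}$ whose Jordan form consists of a single Jordan block of size $\ell-1$. If $r$ is an integer with $2 \le r \le \ell-3$, then $(\wedge^r(A)-1)^{\ell-1} \ne 0$.
   Context: $\wedge^r(A)$ denotes the operator on $\wedge^r(\mathcal{W})$ induced by $A$. *)

theory Defs
  imports "Jordan_Normal_Form.Jordan_Normal_Form" "Jordan_Normal_Form.DL_Submatrix"
begin

text \<open>W = 'a^n (column vectors, indices 0..<n). The r-th exterior power of W has basis
  e_S for S an r-element subset of {0..<n}; a vector of it is represented by its coordinate
  function on such subsets (zero elsewhere).\<close>

definition rsubsets :: "nat \<Rightarrow> nat \<Rightarrow> nat set set" where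
  "rsubsets n r = {S. S \<subseteq> {0..<n} \<and> card S = r}"

text \<open>The operator induced by A on the r-th exterior power: its matrix in the basis e_S
  is the r-th compound matrix, entry (S,T) = det of the submatrix A[S,T].\<close>

definition ext_pow_op :: "nat \<Rightarrow> 'a :: comm_ring_1 mat \<Rightarrow> (nat set \<Rightarrow> 'a) \<Rightarrow> (nat set \<Rightarrow> 'a)" where
  "ext_pow_op r A v = (\<lambda>S. if S \<in> rsubsets (dim_row A) r
      then (\<Sum>T\<in>rsubsets (dim_row A) r. det (submatrix A S T) * v T) else 0)"

definition ext_pow_op_minus_one :: "nat \<Rightarrow> 'a :: comm_ring_1 mat \<Rightarrow> (nat set \<Rightarrow> 'a) \<Rightarrow> (nat set \<Rightarrow> 'a)" where
  "ext_pow_op_minus_one r A v = (\<lambda>S. ext_pow_op r A v S - (if S \<in> rsubsets (dim_row A) r then v S else 0))"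

end

theory Submission
  imports Defs "HOL-Computational_Algebra.Primes"
begin

text \<open>Write \<open>n = l - 1 = 2 k\<close> and \<open>J\<close> for the unipotent Jordan block of size \<open>n\<close>. By Cauchy-Binet
  the compound \<open>\<wedge>\<^sup>r\<close> is multiplicative, so conjugating by the similarity reduces the claim to
  \<open>A = J\<close>. Every minor of \<open>J\<close> on \<open>r\<close>-subsets is \<open>0\<close> or \<open>1\<close>, and \<open>(\<wedge>\<^sup>r J - 1) e\<^sub>T\<close> is the sum of the
  \<open>e\<^sub>U\<close> over the subsets \<open>U \<noteq> T\<close> whose \<open>i\<close>-th elements are all raised by at most one in \<open>T\<close>. Hence the
  \<open>U\<close>-coefficient of \<open>(\<wedge>\<^sup>r J - 1)\<^sup>n e\<^sub>T\<close> counts chains of such covers, and if the element sums of \<open>U\<close>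
  and \<open>T\<close> differ by exactly \<open>n\<close>, every step raises a single element by one. For \<open>U\<close> and \<open>T\<close> the
  bottom and top of a suitable two-parameter family of subsets (a two-row or a two-column Young
  diagram, depending on whether \<open>r \<le> k\<close>), these chains are ballot paths, so the coefficient is the
  Catalan number \<open>(2k choose k) - (2k choose k - 1)\<close>. As \<open>(l - 1 choose j) \<equiv> (-1)\<^sup>j\<close> mod \<open>l\<close>, it is
  \<open>\<plusminus>2 \<noteq> 0\<close> in characteristic \<open>l \<ge> 5\<close>.\<close>

section \<open>Minors on \<open>r\<close>-subsets\<close>

lemma rsubsetsD:
  assumes "S \<in> rsubsets n r"
  shows "finite S" "card S = r" "S \<subseteq> {0..<n}"
  using assms unfolding rsubsets_def by (auto intro: finite_subset)

lemma finite_rsubsets: "finite (rsubsets n r)"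
  unfolding rsubsets_def by (rule finite_subset[of _ "Pow {0..<n}"]) auto

lemma pick_rsubsets_in: "S \<in> rsubsets n r \<Longrightarrow> a < r \<Longrightarrow> pick S a \<in> S"
  using rsubsetsD(2) pick_in_set by metis

lemma pick_rsubsets_less: "S \<in> rsubsets n r \<Longrightarrow> a < r \<Longrightarrow> pick S a < n"
  using pick_rsubsets_in rsubsetsD(3) by fastforce

lemma pick_rsubsets_strict_mono:
  "S \<in> rsubsets n r \<Longrightarrow> a < b \<Longrightarrow> b < r \<Longrightarrow> pick S a < pick S b"
  using rsubsetsD(2) pick_mono by metis

lemma pick_rsubsets_gap:
  assumes S: "S \<in> rsubsets n r"
  shows "b \<le> c \<Longrightarrow> c < r \<Longrightarrow> pick S b + (c - b) \<le> pick S c"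
proof (induction c)
  case (Suc c)
  show ?case
  proof (cases "b = Suc c")
    case False
    then have "pick S b + (c - b) \<le> pick S c" using Suc by simp
    moreover have "pick S c < pick S (Suc c)" using pick_rsubsets_strict_mono[OF S _ Suc.prems(2)] by simp
    ultimately show ?thesis using False Suc.prems(1) by simp
  qed simp
qed simp

lemma inj_on_pick_rsubsets: "S \<in> rsubsets n r \<Longrightarrow> inj_on (pick S) {0..<r}"
  by (rule inj_onI) (metis atLeastLessThan_iff linorder_cases pick_rsubsets_strict_mono less_irrefl)

lemma pick_rsubsets_image:
  assumes "S \<in> rsubsets n r"
  shows "pick S ` {0..<r} = S"
proof -
  have "pick S ` {0..<r} \<subseteq> S" using pick_rsubsets_in[OF assms] by auto
  moreover have "card (pick S ` {0..<r}) = card S"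
    using card_image[OF inj_on_pick_rsubsets[OF assms]] rsubsetsD(2)[OF assms] by simp
  ultimately show ?thesis using card_subset_eq[OF rsubsetsD(1)[OF assms]] by blast
qed

lemma rsubsets_eqI:
  assumes "U \<in> rsubsets n r" "V \<in> rsubsets n r" "\<And>a. a < r \<Longrightarrow> pick U a = pick V a"
  shows "U = V"
  using pick_rsubsets_image[OF assms(1)] pick_rsubsets_image[OF assms(2)] assms(3)
  by (metis atLeastLessThan_iff image_cong)

lemma pick_image_strict_mono:
  fixes g :: "nat \<Rightarrow> nat"
  assumes g: "\<And>a b. a < b \<Longrightarrow> b < r \<Longrightarrow> g a < g b" and a: "a < r"
  shows "pick (g ` {0..<r}) a = g a"
proof -
  have "{x \<in> g ` {0..<r}. x < g a} = g ` {0..<a}"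
  proof (intro equalityI subsetI)
    fix x assume "x \<in> {x \<in> g ` {0..<r}. x < g a}"
    then obtain b where b: "b < r" "x = g b" "g b < g a" by auto
    then have "b < a" using g[of a b] by (metis linorder_neqE_nat order.asym)
    then show "x \<in> g ` {0..<a}" using b by auto
  qed (use g a in auto)
  moreover have "inj_on g {0..<a}"
    by (rule inj_onI) (metis atLeastLessThan_iff linorder_cases g a order.strict_trans less_irrefl)
  ultimately have "card {x \<in> g ` {0..<r}. x < g a} = a" by (simp add: card_image)
  then show ?thesis using pick_card_in_set[of "g a" "g ` {0..<r}"] a by auto
qed

lemma submatrix_rsubsets:
  assumes "X \<in> carrier_mat n n" and U: "U \<in> rsubsets n r" and V: "V \<in> rsubsets n r"
  shows "submatrix X U V = mat r r (\<lambda>(i, j). X $$ (pick U i, pick V j))"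
proof -
  have "{i. i < dim_row X \<and> i \<in> U} = U" "{i. i < dim_col X \<and> i \<in> V} = V"
    using assms rsubsetsD(3)[OF U] rsubsetsD(3)[OF V] by auto
  then show ?thesis unfolding submatrix_def using rsubsetsD(2)[OF U] rsubsetsD(2)[OF V] by simp
qed

lemma permutes_eq_id_if_band:
  fixes f g :: "nat \<Rightarrow> nat"
  assumes \<sigma>: "\<sigma> permutes {0..<r}"
    and f: "\<And>a b. a < b \<Longrightarrow> b < r \<Longrightarrow> f a < f b"
    and g: "\<And>a b. a < b \<Longrightarrow> b < r \<Longrightarrow> g a < g b"
    and band: "\<And>i. i < r \<Longrightarrow> f i \<le> g (\<sigma> i) \<and> g (\<sigma> i) \<le> Suc (f i)"
  shows "\<sigma> = id"
proof (rule ccontr)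
  assume "\<sigma> \<noteq> id"
  then have "\<exists>a. a < r \<and> \<sigma> a \<noteq> a"
    using \<sigma> unfolding permutes_def by (metis atLeastLessThan_iff eq_id_iff zero_le)
  then obtain a where a: "a < r" "\<sigma> a \<noteq> a" and fixed: "\<And>b. b < a \<Longrightarrow> \<sigma> b = b"
    using exists_least_iff[of "\<lambda>a. a < r \<and> \<sigma> a \<noteq> a"] by (metis order.strict_trans)
  have \<sigma>_less: "\<sigma> i < r" if "i < r" for i using permutes_in_image[OF \<sigma>] that by simp
  have "a < \<sigma> a"
    using fixed[of "\<sigma> a"] a permutes_inj[OF \<sigma>] by (metis injD linorder_neqE_nat)
  obtain a' where a': "\<sigma> a' = a" using permutes_surj[OF \<sigma>] by (metis surjD)
  have "a' < r" using a' a \<sigma> unfolding permutes_def by (metis atLeastLessThan_iff zero_le)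
  have "a < a'" using a' a fixed by (metis linorder_neqE_nat)
  \<comment> \<open>\<open>a' > a\<close> is sent down to \<open>a\<close> while \<open>a\<close> is sent up: the band conditions at \<open>a\<close> and \<open>a'\<close> clash\<close>
  have "f a' \<le> g a" using band[OF \<open>a' < r\<close>] a' by simp
  also have "g a < g (\<sigma> a)" using g[OF \<open>a < \<sigma> a\<close> \<sigma>_less[OF a(1)]] .
  also have "g (\<sigma> a) \<le> Suc (f a)" using band[OF a(1)] by simp
  finally show False using f[OF \<open>a < a'\<close> \<open>a' < r\<close>] by simp
qed

lemma det_submatrix_upper_bidiagonal:
  fixes X :: "'a::comm_ring_1 mat"
  assumes X: "X \<in> carrier_mat n n"
    and band: "\<And>x y. x < n \<Longrightarrow> y < n \<Longrightarrow> X $$ (x, y) \<noteq> 0 \<Longrightarrow> x \<le> y \<and> y \<le> Suc x"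
    and U: "U \<in> rsubsets n r" and V: "V \<in> rsubsets n r"
  shows "det (submatrix X U V) = (\<Prod>a<r. X $$ (pick U a, pick V a))"
proof -
  let ?M = "mat r r (\<lambda>(i, j). X $$ (pick U i, pick V j))"
  let ?P = "{\<sigma>. \<sigma> permutes {0..<r}}"
  have vanish: "(\<Prod>i\<in>{0..<r}. ?M $$ (i, \<sigma> i)) = 0" if \<sigma>: "\<sigma> permutes {0..<r}" "\<sigma> \<noteq> id" for \<sigma>
  proof (rule ccontr)
    assume nz: "(\<Prod>i\<in>{0..<r}. ?M $$ (i, \<sigma> i)) \<noteq> 0"
    have \<sigma>_less: "\<sigma> i < r" if "i < r" for i using permutes_in_image[OF \<sigma>(1)] that by simp
    have band_pick: "pick U i \<le> pick V (\<sigma> i) \<and> pick V (\<sigma> i) \<le> Suc (pick U i)" if "i < r" for i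
    proof (rule band[OF pick_rsubsets_less[OF U that] pick_rsubsets_less[OF V \<sigma>_less[OF that]]])
      show "X $$ (pick U i, pick V (\<sigma> i)) \<noteq> 0"
      proof
        assume "X $$ (pick U i, pick V (\<sigma> i)) = 0"
        then have "(\<Prod>i\<in>{0..<r}. ?M $$ (i, \<sigma> i)) = 0"
          using that \<sigma>_less[OF that] by (intro prod_zero bexI[of _ i]) auto
        with nz show False ..
      qed
    qed
    have "\<sigma> = id"
      using permutes_eq_id_if_band[where f = "pick U" and g = "pick V", OF \<sigma>(1)
          pick_rsubsets_strict_mono[OF U] pick_rsubsets_strict_mono[OF V] band_pick] .
    with \<sigma>(2) show False ..
  qed
  have "det ?M = (\<Sum>\<sigma>\<in>?P. signof \<sigma> * (\<Prod>i\<in>{0..<r}. ?M $$ (i, \<sigma> i)))"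
    using det_def'[of ?M r] by simp
  also have "\<dots> = signof id * (\<Prod>i\<in>{0..<r}. ?M $$ (i, id i))"
  proof (subst sum.remove[of _ id])
    show "finite ?P" by (simp add: finite_permutations)
    show "id \<in> ?P" by (simp add: permutes_id)
  qed (use vanish in \<open>simp add: sum.neutral\<close>)
  also have "\<dots> = (\<Prod>a<r. X $$ (pick U a, pick V a))"
    by (simp add: atLeast0LessThan)
  finally show ?thesis using submatrix_rsubsets[OF X U V] by simp
qed

section \<open>Cauchy-Binet and functoriality of the compound\<close>

lemma sorting_permutation_of_inj_on:
  fixes f :: "nat \<Rightarrow> nat"
  assumes inj: "inj_on f {0..<r}" and range: "f ` {0..<r} \<subseteq> {0..<n}"
  defines "\<sigma> \<equiv> \<lambda>i. if i < r then inv_into {0..<r} (pick (f ` {0..<r})) (f i) else i"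
  shows "f ` {0..<r} \<in> rsubsets n r" and "\<sigma> permutes {0..<r}"
    and "\<And>i. i < r \<Longrightarrow> pick (f ` {0..<r}) (\<sigma> i) = f i"
proof -
  let ?U = "{0..<r}"
  show W: "f ` ?U \<in> rsubsets n r"
    using inj range card_image[OF inj] unfolding rsubsets_def by auto
  have pick_image: "f i \<in> pick (f ` ?U) ` ?U" if "i < r" for i
    using pick_rsubsets_image[OF W] that by auto
  show pick_\<sigma>: "pick (f ` ?U) (\<sigma> i) = f i" if "i < r" for i
    using f_inv_into_f[OF pick_image[OF that]] that unfolding \<sigma>_def by simp
  have "\<sigma> ` ?U \<subseteq> ?U"
    using inv_into_into[OF pick_image] unfolding \<sigma>_def by auto
  moreover have "inj_on \<sigma> ?U"
    by (rule inj_onI) (metis pick_\<sigma> inj atLeastLessThan_iff inj_on_def)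
  ultimately have "bij_betw \<sigma> ?U ?U" unfolding bij_betw_def using endo_inj_surj by blast
  then show "\<sigma> permutes ?U" by (rule bij_imp_permutes) (simp add: \<sigma>_def)
qed

lemma sum_injective_maps_by_image:
  fixes n r :: nat and G :: "(nat \<Rightarrow> nat) \<Rightarrow> 'b::comm_monoid_add"
  defines "F \<equiv> {f. (\<forall>i\<in>{0..<r}. f i \<in> {0..<n}) \<and> (\<forall>i. i \<notin> {0..<r} \<longrightarrow> f i = i)}"
  shows "(\<Sum>f\<in>{f \<in> F. inj_on f {0..<r}}. G f) =
    (\<Sum>W\<in>rsubsets n r. \<Sum>\<sigma>\<in>{\<sigma>. \<sigma> permutes {0..<r}}. G (\<lambda>i. if i < r then pick W (\<sigma> i) else i))"
proof -
  let ?U = "{0..<r}"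
  let ?Fi = "{f \<in> F. inj_on f ?U}"
  let ?R = "rsubsets n r"
  define h where "h = (\<lambda>(W, \<sigma>::nat \<Rightarrow> nat). (\<lambda>i. if i < r then pick W (\<sigma> i) else i))"
  define k where "k = (\<lambda>f::nat \<Rightarrow> nat. (f ` ?U, \<lambda>i. if i < r then inv_into ?U (pick (f ` ?U)) (f i) else i))"
  have h_in: "h (W, \<sigma>) \<in> ?Fi" if W: "W \<in> ?R" and \<sigma>: "\<sigma> permutes ?U" for W \<sigma>
  proof -
    have "inj_on (pick W \<circ> \<sigma>) ?U"
      by (rule comp_inj_on) (use permutes_inj_on[OF \<sigma>] inj_on_pick_rsubsets[OF W] permutes_image[OF \<sigma>] in auto)
    then have "inj_on (h (W, \<sigma>)) ?U" unfolding h_def by (simp add: inj_on_def)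
    then show ?thesis
      using pick_rsubsets_less[OF W] permutes_in_image[OF \<sigma>] unfolding h_def F_def by auto
  qed
  have range: "f ` ?U \<subseteq> {0..<n}" if "f \<in> ?Fi" for f using that unfolding F_def by auto
  have h_k: "h (k f) = f" if f: "f \<in> ?Fi" for f
    using sorting_permutation_of_inj_on(3)[OF _ range[OF f]] f unfolding h_def k_def F_def by auto
  have k_in: "k f \<in> ?R \<times> {\<sigma>. \<sigma> permutes ?U}" if f: "f \<in> ?Fi" for f
    using sorting_permutation_of_inj_on(1,2)[OF _ range[OF f]] f unfolding k_def by auto
  have k_h: "k (h (W, \<sigma>)) = (W, \<sigma>)" if W: "W \<in> ?R" and \<sigma>: "\<sigma> permutes ?U" for W \<sigma>
  proof -
    have "h (W, \<sigma>) ` ?U = pick W ` (\<sigma> ` ?U)" unfolding h_def by (auto simp: image_image)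
    then have image: "h (W, \<sigma>) ` ?U = W" using permutes_image[OF \<sigma>] pick_rsubsets_image[OF W] by simp
    have "(\<lambda>i. if i < r then inv_into ?U (pick W) (h (W, \<sigma>) i) else i) = \<sigma>"
      using inv_into_f_f[OF inj_on_pick_rsubsets[OF W]] permutes_in_image[OF \<sigma>] \<sigma>
      unfolding h_def permutes_def by fastforce
    then show ?thesis unfolding k_def image by simp
  qed
  have "(\<Sum>f\<in>?Fi. G f) = (\<Sum>p\<in>?R \<times> {\<sigma>. \<sigma> permutes ?U}. G (h p))"
    by (rule sum.reindex_bij_witness[of _ h k]) (use h_k k_in k_h h_in in auto)
  then show ?thesis unfolding sum.cartesian_product h_def by (simp add: prod.case_distrib)
qed

lemma sum_permutes_det_rows_pick:
  fixes X Y :: "'a::comm_ring_1 mat"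
  assumes Y: "Y \<in> carrier_mat n r" and W: "W \<in> rsubsets n r"
  shows "(\<Sum>\<sigma> | \<sigma> permutes {0..<r}.
      (\<Prod>i\<in>{0..<r}. X $$ (i, pick W (\<sigma> i))) * det (mat\<^sub>r r r (\<lambda>i. row Y (pick W (\<sigma> i))))) =
    det (mat r r (\<lambda>(i, j). X $$ (i, pick W j))) * det (mat r r (\<lambda>(i, j). Y $$ (pick W i, j)))"
proof -
  let ?XW = "mat r r (\<lambda>(i, j). X $$ (i, pick W j))"
  let ?YW = "mat r r (\<lambda>(i, j). Y $$ (pick W i, j))"
  have summand: "(\<Prod>i\<in>{0..<r}. X $$ (i, pick W (\<sigma> i))) * det (mat\<^sub>r r r (\<lambda>i. row Y (pick W (\<sigma> i)))) =
      signof \<sigma> * (\<Prod>i\<in>{0..<r}. ?XW $$ (i, \<sigma> i)) * det ?YW" if \<sigma>: "\<sigma> permutes {0..<r}" for \<sigma>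
  proof -
    have \<sigma>_less: "\<sigma> i < r" if "i < r" for i using permutes_in_image[OF \<sigma>] that by simp
    have "mat\<^sub>r r r (\<lambda>i. row Y (pick W (\<sigma> i))) = mat r r (\<lambda>(i, j). ?YW $$ (\<sigma> i, j))"
      by (rule eq_matI) (use Y \<sigma>_less pick_rsubsets_less[OF W] in auto)
    then have "det (mat\<^sub>r r r (\<lambda>i. row Y (pick W (\<sigma> i)))) = signof \<sigma> * det ?YW"
      using det_permute_rows[of ?YW r \<sigma>] \<sigma> by simp
    moreover have "(\<Prod>i\<in>{0..<r}. X $$ (i, pick W (\<sigma> i))) = (\<Prod>i\<in>{0..<r}. ?XW $$ (i, \<sigma> i))"
      by (rule prod.cong) (use \<sigma>_less in auto)
    ultimately show ?thesis by (simp add: ac_simps)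
  qed
  have "(\<Sum>\<sigma> | \<sigma> permutes {0..<r}.
      (\<Prod>i\<in>{0..<r}. X $$ (i, pick W (\<sigma> i))) * det (mat\<^sub>r r r (\<lambda>i. row Y (pick W (\<sigma> i))))) =
      (\<Sum>\<sigma> | \<sigma> permutes {0..<r}. signof \<sigma> * (\<Prod>i\<in>{0..<r}. ?XW $$ (i, \<sigma> i))) * det ?YW"
    unfolding sum_distrib_right using summand by (intro sum.cong) auto
  also have "\<dots> = det ?XW * det ?YW" using det_def'[of ?XW r] by simp
  finally show ?thesis .
qed

lemma cauchy_binet_rect:
  fixes X Y :: "'a::comm_ring_1 mat"
  assumes X: "X \<in> carrier_mat r n" and Y: "Y \<in> carrier_mat n r"
  shows "det (X * Y) = (\<Sum>W\<in>rsubsets n r. det (mat r r (\<lambda>(i, j). X $$ (i, pick W j))) *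
                                         det (mat r r (\<lambda>(i, j). Y $$ (pick W i, j))))"
proof -
  let ?U = "{0..<r}"
  let ?F = "{f. (\<forall>i\<in>?U. f i \<in> {0..<n}) \<and> (\<forall>i. i \<notin> ?U \<longrightarrow> f i = i)}"
  let ?g = "\<lambda>f. det (mat\<^sub>r r r (\<lambda>i. X $$ (i, f i) \<cdot>\<^sub>v row Y (f i)))"
  have g_eq: "?g f = (\<Prod>i\<in>?U. X $$ (i, f i)) * det (mat\<^sub>r r r (\<lambda>i. row Y (f i)))" for f
    by (rule det_rows_mul) (use Y in auto)
  have g_zero: "?g f = 0" if not_inj: "\<not> inj_on f ?U" for f
  proof -
    obtain i j where ij: "i \<in> ?U" "j \<in> ?U" "f i = f j" "i \<noteq> j"
      using not_inj unfolding inj_on_def by blast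
    have "det (mat\<^sub>r r r (\<lambda>i. row Y (f i))) = 0"
      by (rule det_identical_rows[of _ r i j]) (use ij in auto)
    then show ?thesis unfolding g_eq by simp
  qed
  have "det (X * Y) = sum ?g ?F"
    unfolding mat_mul_finsum_alt[OF X Y] by (rule det_linear_rows_sum) (use X Y in auto)
  also have "\<dots> = sum ?g {f \<in> ?F. inj_on f ?U}"
  proof (rule sum.mono_neutral_right)
    show "finite ?F" by (rule finite_bounded_functions) auto
  qed (auto intro: g_zero)
  also have "\<dots> = (\<Sum>W\<in>rsubsets n r. \<Sum>\<sigma> | \<sigma> permutes ?U. ?g (\<lambda>i. if i < r then pick W (\<sigma> i) else i))"
    by (rule sum_injective_maps_by_image)
  also have "\<dots> = (\<Sum>W\<in>rsubsets n r. \<Sum>\<sigma> | \<sigma> permutes ?U.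
      (\<Prod>i\<in>?U. X $$ (i, pick W (\<sigma> i))) * det (mat\<^sub>r r r (\<lambda>i. row Y (pick W (\<sigma> i)))))"
  proof (intro sum.cong refl)
    fix W \<sigma>
    have "mat\<^sub>r r r (\<lambda>i. row Y (if i < r then pick W (\<sigma> i) else i)) = mat\<^sub>r r r (\<lambda>i. row Y (pick W (\<sigma> i)))"
      by (rule eq_matI) auto
    then show "?g (\<lambda>i. if i < r then pick W (\<sigma> i) else i) =
        (\<Prod>i\<in>?U. X $$ (i, pick W (\<sigma> i))) * det (mat\<^sub>r r r (\<lambda>i. row Y (pick W (\<sigma> i))))"
      unfolding g_eq by (auto intro: prod.cong)
  qed
  finally show ?thesis using sum_permutes_det_rows_pick[OF Y] by simp
qed

lemma det_submatrix_mult: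
  fixes X Y :: "'a::comm_ring_1 mat"
  assumes X: "X \<in> carrier_mat n n" and Y: "Y \<in> carrier_mat n n"
    and U: "U \<in> rsubsets n r" and V: "V \<in> rsubsets n r"
  shows "det (submatrix (X * Y) U V) = (\<Sum>W\<in>rsubsets n r. det (submatrix X U W) * det (submatrix Y W V))"
proof -
  let ?X' = "mat r n (\<lambda>(i, j). X $$ (pick U i, j))"
  let ?Y' = "mat n r (\<lambda>(i, j). Y $$ (i, pick V j))"
  have "submatrix (X * Y) U V = ?X' * ?Y'"
    unfolding submatrix_rsubsets[OF mult_carrier_mat[OF X Y] U V]
    by (rule eq_matI) (use X Y pick_rsubsets_less[OF U] pick_rsubsets_less[OF V] in
        \<open>auto simp: scalar_prod_def intro!: sum.cong\<close>)
  moreover have "mat r r (\<lambda>(i, j). ?X' $$ (i, pick W j)) = submatrix X U W"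
    and "mat r r (\<lambda>(i, j). ?Y' $$ (pick W i, j)) = submatrix Y W V" if W: "W \<in> rsubsets n r" for W
    unfolding submatrix_rsubsets[OF X U W] submatrix_rsubsets[OF Y W V]
    by (rule eq_matI; use pick_rsubsets_less[OF W] in auto)+
  ultimately show ?thesis using cauchy_binet_rect[of ?X' r n ?Y'] by simp
qed

definition rsubsets_supported :: "nat \<Rightarrow> nat \<Rightarrow> (nat set \<Rightarrow> 'a::zero) \<Rightarrow> bool" where
  "rsubsets_supported n r v \<longleftrightarrow> (\<forall>S. S \<notin> rsubsets n r \<longrightarrow> v S = 0)"

lemma prod_lessThan_of_bool: "(\<Prod>a<(r::nat). of_bool (c a) :: 'a::comm_semiring_1) = of_bool (\<forall>a<r. c a)"
  by (induction r) (auto simp: less_Suc_eq)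

lemma rsubsets_supported_ext_pow_op: "dim_row X = n \<Longrightarrow> rsubsets_supported n r (ext_pow_op r X v)"
  unfolding rsubsets_supported_def ext_pow_op_def by auto

lemma ext_pow_op_minus_one_eq:
  "dim_row X = n \<Longrightarrow> rsubsets_supported n r v \<Longrightarrow>
    ext_pow_op_minus_one r X v = (\<lambda>S. ext_pow_op r X v S - v S)"
  unfolding ext_pow_op_minus_one_def rsubsets_supported_def by auto

lemma rsubsets_supported_ext_pow_op_minus_one_pow:
  assumes "dim_row X = n" and "rsubsets_supported n r v"
  shows "rsubsets_supported n r ((ext_pow_op_minus_one r X ^^ j) v)"
proof (induction j)
  case (Suc j)
  then show ?case
    using ext_pow_op_minus_one_eq[OF assms(1) Suc] rsubsets_supported_ext_pow_op[OF assms(1)]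
    by (simp add: rsubsets_supported_def)
qed (use assms(2) in simp)

lemma ext_pow_op_diff:
  "ext_pow_op r X (\<lambda>S. f S - g S) = (\<lambda>S. ext_pow_op r X f S - ext_pow_op r X g S)"
  unfolding ext_pow_op_def by (auto simp: sum_subtractf right_diff_distrib)

lemma ext_pow_op_mult:
  fixes X Y :: "'a::comm_ring_1 mat"
  assumes X: "X \<in> carrier_mat n n" and Y: "Y \<in> carrier_mat n n"
  shows "ext_pow_op r (X * Y) v = ext_pow_op r X (ext_pow_op r Y v)"
proof
  fix S
  let ?R = "rsubsets n r"
  show "ext_pow_op r (X * Y) v S = ext_pow_op r X (ext_pow_op r Y v) S"
  proof (cases "S \<in> ?R")
    case True
    have "ext_pow_op r (X * Y) v S = (\<Sum>T\<in>?R. \<Sum>W\<in>?R. det (submatrix X S W) * (det (submatrix Y W T) * v T))"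
      unfolding ext_pow_op_def using X Y True
      by (simp add: det_submatrix_mult[OF X Y True] sum_distrib_right mult.assoc)
    also have "\<dots> = (\<Sum>W\<in>?R. \<Sum>T\<in>?R. det (submatrix X S W) * (det (submatrix Y W T) * v T))"
      by (rule sum.swap)
    also have "\<dots> = ext_pow_op r X (ext_pow_op r Y v) S"
      unfolding ext_pow_op_def using X Y True by (simp add: sum_distrib_left)
    finally show ?thesis .
  qed (use X Y in \<open>simp add: ext_pow_op_def\<close>)
qed

lemma det_submatrix_one_mat:
  assumes S: "S \<in> rsubsets n r" and T: "T \<in> rsubsets n r"
  shows "det (submatrix (1\<^sub>m n :: 'a::comm_ring_1 mat) S T) = of_bool (S = T)"
proof -
  have "det (submatrix (1\<^sub>m n :: 'a mat) S T) = (\<Prod>a<r. (1\<^sub>m n :: 'a mat) $$ (pick S a, pick T a))"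
    by (rule det_submatrix_upper_bidiagonal[OF one_carrier_mat _ S T]) (auto split: if_splits)
  also have "\<dots> = (\<Prod>a<r. of_bool (pick S a = pick T a))"
    by (rule prod.cong[OF refl]) (use pick_rsubsets_less[OF S] pick_rsubsets_less[OF T] in auto)
  also have "\<dots> = of_bool (S = T)"
    unfolding prod_lessThan_of_bool using rsubsets_eqI[OF S T] by auto
  finally show ?thesis .
qed

lemma ext_pow_op_one_mat:
  assumes "rsubsets_supported n r v"
  shows "ext_pow_op r (1\<^sub>m n :: 'a::comm_ring_1 mat) v = v"
proof
  fix S
  show "ext_pow_op r (1\<^sub>m n :: 'a mat) v S = v S"
  proof (cases "S \<in> rsubsets n r")
    case True
    then have "ext_pow_op r (1\<^sub>m n :: 'a mat) v S = (\<Sum>T\<in>rsubsets n r. if S = T then v T else 0)"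
      unfolding ext_pow_op_def by (auto simp: det_submatrix_one_mat intro: sum.cong)
    then show ?thesis using True finite_rsubsets by (simp add: sum.delta)
  qed (use assms in \<open>simp add: ext_pow_op_def rsubsets_supported_def\<close>)
qed

lemma ext_pow_op_left_inverse:
  fixes P Q :: "'a::comm_ring_1 mat"
  assumes "P \<in> carrier_mat n n" "Q \<in> carrier_mat n n" "Q * P = 1\<^sub>m n" and "rsubsets_supported n r v"
  shows "ext_pow_op r Q (ext_pow_op r P v) = v"
  using ext_pow_op_mult[OF assms(2,1)] ext_pow_op_one_mat[OF assms(4)] assms(3) by simp

lemma ext_pow_op_minus_one_pow_similar:
  fixes P Q J :: "'a::comm_ring_1 mat"
  assumes P: "P \<in> carrier_mat n n" and Q: "Q \<in> carrier_mat n n" and J: "J \<in> carrier_mat n n"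
    and QP: "Q * P = 1\<^sub>m n" and x: "rsubsets_supported n r x"
  shows "(ext_pow_op_minus_one r (P * J * Q) ^^ j) (ext_pow_op r P x) =
    ext_pow_op r P ((ext_pow_op_minus_one r J ^^ j) x)"
proof (induction j)
  case (Suc j)
  let ?y = "(ext_pow_op_minus_one r J ^^ j) x"
  have y: "rsubsets_supported n r ?y"
    using rsubsets_supported_ext_pow_op_minus_one_pow[of J n r x j] J x by simp
  have PJQ: "P * J * Q \<in> carrier_mat n n" using P J Q by simp
  have "ext_pow_op_minus_one r (P * J * Q) (ext_pow_op r P ?y) =
      (\<lambda>S. ext_pow_op r (P * J * Q) (ext_pow_op r P ?y) S - ext_pow_op r P ?y S)"
    using ext_pow_op_minus_one_eq rsubsets_supported_ext_pow_op PJQ P by (metis carrier_matD(1))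
  also have "ext_pow_op r (P * J * Q) (ext_pow_op r P ?y) = ext_pow_op r P (ext_pow_op r J ?y)"
    using ext_pow_op_mult[OF mult_carrier_mat[OF P J] Q] ext_pow_op_mult[OF P J]
      ext_pow_op_left_inverse[OF P Q QP y] by simp
  also have "(\<lambda>S. ext_pow_op r P (ext_pow_op r J ?y) S - ext_pow_op r P ?y S) =
      ext_pow_op r P (ext_pow_op_minus_one r J ?y)"
    using ext_pow_op_minus_one_eq[of J n r ?y] J y by (simp add: ext_pow_op_diff)
  finally have "ext_pow_op_minus_one r (P * J * Q) (ext_pow_op r P ?y) = ext_pow_op r P (ext_pow_op_minus_one r J ?y)" .
  then show ?case using Suc.IH by simp
qed simp

lemma ext_pow_op_minus_one_pow_nonzero_if_similar:
  fixes A J :: "'a::comm_ring_1 mat"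
  assumes A: "A \<in> carrier_mat n n" and sim: "similar_mat A J"
    and x: "rsubsets_supported n r x" and nz: "(ext_pow_op_minus_one r J ^^ j) x \<noteq> (\<lambda>_. 0)"
  shows "\<exists>v. rsubsets_supported n r v \<and> (ext_pow_op_minus_one r A ^^ j) v \<noteq> (\<lambda>_. 0)"
proof -
  obtain P Q where P: "P \<in> carrier_mat n n" and Q: "Q \<in> carrier_mat n n" and J: "J \<in> carrier_mat n n"
    and QP: "Q * P = 1\<^sub>m n" and A_eq: "A = P * J * Q"
    using sim A unfolding similar_mat_def similar_mat_wit_def Let_def by auto
  let ?w = "(ext_pow_op_minus_one r J ^^ j) x"
  have inverse: "ext_pow_op r Q (ext_pow_op r P ?w) = ?w"
    using ext_pow_op_left_inverse[OF P Q QP] rsubsets_supported_ext_pow_op_minus_one_pow[of J n r x j] J x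
    by simp
  have "ext_pow_op r P ?w \<noteq> (\<lambda>_. 0)"
  proof
    assume "ext_pow_op r P ?w = (\<lambda>_. 0)"
    then have "?w = ext_pow_op r Q (\<lambda>_. 0)" using inverse by simp
    also have "\<dots> = (\<lambda>_. 0)" unfolding ext_pow_op_def by auto
    finally show False using nz by contradiction
  qed
  then have "(ext_pow_op_minus_one r A ^^ j) (ext_pow_op r P x) \<noteq> (\<lambda>_. 0)"
    unfolding A_eq ext_pow_op_minus_one_pow_similar[OF P Q J QP x] .
  moreover have "rsubsets_supported n r (ext_pow_op r P x)"
    using rsubsets_supported_ext_pow_op[of P n] P by simp
  ultimately show ?thesis by blast
qed

section \<open>The compound of a unipotent Jordan block\<close>

definition covered_by :: "nat \<Rightarrow> nat set \<Rightarrow> nat set \<Rightarrow> bool" where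
  "covered_by r U V \<longleftrightarrow> U \<noteq> V \<and> (\<forall>a<r. pick U a \<le> pick V a \<and> pick V a \<le> Suc (pick U a))"

definition weight :: "nat \<Rightarrow> nat set \<Rightarrow> nat" where
  "weight r U = (\<Sum>a<r. pick U a)"

definition unit_covers :: "nat \<Rightarrow> nat \<Rightarrow> nat set \<Rightarrow> nat set set" where
  "unit_covers n r U = {V \<in> rsubsets n r. covered_by r U V \<and> weight r V = Suc (weight r U)}"

lemma det_submatrix_jordan_block:
  assumes U: "U \<in> rsubsets n r" and V: "V \<in> rsubsets n r"
  shows "det (submatrix (jordan_block n (1::'a::comm_ring_1)) U V) =
    of_bool (\<forall>a<r. pick U a \<le> pick V a \<and> pick V a \<le> Suc (pick U a))"
proof -
  let ?J = "jordan_block n (1::'a)"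
  have J: "?J \<in> carrier_mat n n" by (simp add: jordan_block_def)
  have "det (submatrix ?J U V) = (\<Prod>a<r. ?J $$ (pick U a, pick V a))"
    by (rule det_submatrix_upper_bidiagonal[OF J _ U V]) (auto split: if_splits)
  also have "\<dots> = (\<Prod>a<r. of_bool (pick U a \<le> pick V a \<and> pick V a \<le> Suc (pick U a)))"
    by (rule prod.cong[OF refl]) (use pick_rsubsets_less[OF U] pick_rsubsets_less[OF V] in auto)
  finally show ?thesis unfolding prod_lessThan_of_bool .
qed

lemma ext_pow_op_minus_one_jordan_block:
  assumes U: "U \<in> rsubsets n r"
  shows "ext_pow_op_minus_one r (jordan_block n (1::'a::comm_ring_1)) v U =
    (\<Sum>V\<in>{V \<in> rsubsets n r. covered_by r U V}. v V)"
proof -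
  let ?R = "rsubsets n r"
  let ?band = "\<lambda>V. \<forall>a<r. pick U a \<le> pick V a \<and> pick V a \<le> Suc (pick U a)"
  have "ext_pow_op r (jordan_block n (1::'a)) v U = (\<Sum>V\<in>?R. if ?band V then v V else 0)"
    unfolding ext_pow_op_def using U by (auto simp: det_submatrix_jordan_block intro!: sum.cong)
  also have "\<dots> = (\<Sum>V\<in>{V \<in> ?R. ?band V}. v V)"
    by (rule sum.inter_filter[OF finite_rsubsets, symmetric])
  also have "\<dots> = v U + (\<Sum>V\<in>{V \<in> ?R. ?band V} - {U}. v V)"
    by (rule sum.remove) (use finite_rsubsets U in auto)
  also have "{V \<in> ?R. ?band V} - {U} = {V \<in> ?R. covered_by r U V}"
    unfolding covered_by_def by auto
  finally show ?thesis unfolding ext_pow_op_minus_one_def using U by simp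
qed

lemma weight_less_if_covered_by:
  assumes U: "U \<in> rsubsets n r" and V: "V \<in> rsubsets n r" and "covered_by r U V"
  shows "weight r U < weight r V"
proof -
  have le: "\<forall>a\<in>{..<r}. pick U a \<le> pick V a" using assms(3) unfolding covered_by_def by auto
  have "\<exists>a<r. pick U a \<noteq> pick V a"
    using rsubsets_eqI[OF U V] assms(3) unfolding covered_by_def by blast
  then have "\<exists>a\<in>{..<r}. pick U a < pick V a" using le by (auto simp: order_less_le)
  then show ?thesis unfolding weight_def by (rule sum_strict_mono_ex1[OF _ le, rotated]) simp
qed

lemma unit_covers_shift_one:
  assumes "V \<in> unit_covers n r U"
  shows "\<exists>a<r. \<forall>b<r. pick V b = pick U b + (if b = a then 1 else 0)"
proof -
  define \<delta> where "\<delta> b = pick V b - pick U b" for b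
  have cov: "covered_by r U V" and w: "weight r V = Suc (weight r U)"
    using assms unfolding unit_covers_def by auto
  have pick_V: "pick V b = pick U b + \<delta> b" and \<delta>_le: "\<delta> b \<le> 1" if "b < r" for b
    using cov that unfolding covered_by_def \<delta>_def by auto
  have "weight r V = weight r U + (\<Sum>b<r. \<delta> b)"
    unfolding weight_def using pick_V by (simp add: sum.distrib)
  then have sum_\<delta>: "(\<Sum>b<r. \<delta> b) = 1" using w by simp
  then obtain a where a: "a < r" "\<delta> a \<noteq> 0" by (metis lessThan_iff sum.neutral zero_neq_one)
  then have "\<delta> a = 1" using \<delta>_le by fastforce
  moreover have "(\<Sum>b<r. \<delta> b) = \<delta> a + (\<Sum>b\<in>{..<r} - {a}. \<delta> b)" by (rule sum.remove) (use a in auto)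
  ultimately have "\<delta> b = 0" if "b < r" "b \<noteq> a" for b using sum_\<delta> that by simp
  then show ?thesis using a pick_V \<open>\<delta> a = 1\<close> by (intro exI[of _ a]) auto
qed

lemma jordan_block_iterate_vanish:
  assumes "weight r T < weight r U + j"
  shows "(ext_pow_op_minus_one r (jordan_block n (1::'a::comm_ring_1)) ^^ j) (\<lambda>S. of_bool (S = T)) U = 0"
  using assms
proof (induction j arbitrary: U)
  case (Suc j)
  show ?case
  proof (cases "U \<in> rsubsets n r")
    case True
    have "weight r T < weight r V + j" if "V \<in> rsubsets n r" "covered_by r U V" for V
      using Suc.prems weight_less_if_covered_by[OF True that] by simp
    then show ?thesis
      using Suc.IH by (auto simp: ext_pow_op_minus_one_jordan_block[OF True] intro!: sum.neutral)
  qed (simp add: ext_pow_op_minus_one_def ext_pow_op_def)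
qed auto

lemma jordan_block_iterate_step:
  assumes U: "U \<in> rsubsets n r" and w: "weight r U + Suc j = weight r T"
  shows "(ext_pow_op_minus_one r (jordan_block n (1::'a::comm_ring_1)) ^^ Suc j) (\<lambda>S. of_bool (S = T)) U =
    (\<Sum>V\<in>unit_covers n r U. (ext_pow_op_minus_one r (jordan_block n 1) ^^ j) (\<lambda>S. of_bool (S = T)) V)"
proof -
  let ?N = "ext_pow_op_minus_one r (jordan_block n (1::'a))"
  let ?e = "\<lambda>S. of_bool (S = T) :: 'a"
  have "(?N ^^ Suc j) ?e U = (\<Sum>V\<in>{V \<in> rsubsets n r. covered_by r U V}. (?N ^^ j) ?e V)"
    using ext_pow_op_minus_one_jordan_block[OF U] by simp
  also have "\<dots> = (\<Sum>V\<in>unit_covers n r U. (?N ^^ j) ?e V)"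
  proof (rule sum.mono_neutral_right)
    show "\<forall>V\<in>{V \<in> rsubsets n r. covered_by r U V} - unit_covers n r U. (?N ^^ j) ?e V = 0"
    proof
      fix V assume "V \<in> {V \<in> rsubsets n r. covered_by r U V} - unit_covers n r U"
      then have "Suc (weight r U) < weight r V"
        using weight_less_if_covered_by[OF U] unfolding unit_covers_def by fastforce
      then show "(?N ^^ j) ?e V = 0" using w by (intro jordan_block_iterate_vanish) simp
    qed
  qed (auto simp: unit_covers_def finite_rsubsets)
  finally show ?thesis .
qed

section \<open>Ballot numbers\<close>

text \<open>\<open>ballot a b\<close> counts the lattice paths from \<open>(a, b)\<close> to the origin that decrease one
  coordinate at a time and stay in the region \<open>b \<le> a\<close>.\<close>

fun ballot :: "nat \<Rightarrow> nat \<Rightarrow> nat" where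
  "ballot 0 b = (if b = 0 then 1 else 0)"
| "ballot (Suc a) 0 = ballot a 0"
| "ballot (Suc a) (Suc b) = (if b \<le> a then ballot (Suc a) b + ballot a (Suc b) else 0)"

lemma ballot_eq_0: "a < b \<Longrightarrow> ballot a b = 0"
  by (cases a; cases b) auto

lemma ballot_rec:
  assumes "b \<le> a" and "0 < a"
  shows "ballot a b = (if 0 < b then ballot a (b - 1) else 0) + (if b < a then ballot (a - 1) b else 0)"
  using assms ballot_eq_0[of "a - 1" b] by (cases a; cases b) auto

lemma ballot_plus_choose:
  "b \<le> Suc a \<Longrightarrow> ballot a b + (if b = 0 then 0 else (a + b) choose (b - 1)) = (a + b) choose b"
proof (induction a b rule: ballot.induct)
  case (1 b)
  then show ?case by (cases b) auto
next
  case (2 a)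
  then show ?case by (cases a) auto
next
  case (3 a b)
  show ?case
  proof (cases "b \<le> a")
    case True
    define N where "N = a + b + 1"
    have N: "Suc a + b = N" "a + Suc b = N" "Suc a + Suc b = Suc N" unfolding N_def by simp_all
    have "ballot (Suc a) b + (if b = 0 then 0 else N choose (b - 1)) = N choose b"
      using 3(1)[OF True] True unfolding N(1) by simp
    moreover have "ballot a (Suc b) + (N choose b) = N choose Suc b"
      using 3(2)[OF True] True unfolding N(2) by simp
    moreover have "Suc N choose b = (if b = 0 then 0 else N choose (b - 1)) + (N choose b)"
      by (cases b) simp_all
    moreover have "ballot (Suc a) (Suc b) = ballot (Suc a) b + ballot a (Suc b)" using True by simp
    ultimately have "ballot (Suc a) (Suc b) + (Suc N choose b) = Suc N choose Suc b"
      by simp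
    then show ?thesis unfolding N(3) by simp
  next
    case False
    then have "b = Suc a" using 3(3) by simp
    then show ?thesis using False binomial_symmetric[of "Suc b" "Suc a + Suc b"] by simp
  qed
qed

lemma of_nat_choose_prime_minus_one:
  assumes p: "prime l" and c: "CHAR('a::comm_ring_1) = l"
  shows "j \<le> l - 1 \<Longrightarrow> (of_nat ((l - 1) choose j) :: 'a) = (-1) ^ j"
proof (induction j)
  case (Suc j)
  have l2: "2 \<le> l" using p prime_ge_2_nat by blast
  have "l dvd (l choose Suc j)"
    by (rule dvd_choose_prime) (use Suc.prems l2 p in auto)
  then have "(of_nat (l choose Suc j) :: 'a) = 0" using c by (simp add: of_nat_eq_0_iff_char_dvd)
  moreover have "l choose Suc j = ((l - 1) choose j) + ((l - 1) choose Suc j)"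
    using l2 binomial_Suc_Suc[of "l - 1" j] by simp
  ultimately have "(of_nat ((l - 1) choose Suc j) :: 'a) = - of_nat ((l - 1) choose j)"
    by (simp add: eq_neg_iff_add_eq_0 add.commute)
  then show ?case using Suc by simp
qed simp

lemma of_nat_ballot_diagonal_nonzero:
  assumes p: "prime l" and c: "CHAR('a::field) = l" and l5: "5 \<le> l" and k: "2 * k = l - 1"
  shows "(of_nat (ballot k k) :: 'a) \<noteq> 0"
proof -
  have k1: "1 \<le> k" using k l5 by simp
  have "ballot k k + ((l - 1) choose (k - 1)) = (l - 1) choose k"
    using ballot_plus_choose[of k k] k1 k by (simp add: mult_2)
  then have "(of_nat (ballot k k) :: 'a) = of_nat ((l - 1) choose k) - of_nat ((l - 1) choose (k - 1))"
    by (metis add_diff_cancel_right' of_nat_add)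
  also have "\<dots> = - 2 * (-1) ^ (k - 1)"
    using of_nat_choose_prime_minus_one[OF p c, of k] of_nat_choose_prime_minus_one[OF p c, of "k - 1"] k k1
    by (cases k) simp_all
  finally have ballot_eq: "(of_nat (ballot k k) :: 'a) = - 2 * (-1) ^ (k - 1)" .
  have "\<not> l dvd 2" using l5 by (auto dest: dvd_imp_le)
  then have "(2::'a) \<noteq> 0" using c of_nat_eq_0_iff_char_dvd[of 2, where 'a='a] by simp
  then show ?thesis unfolding ballot_eq by simp
qed

section \<open>Families of subsets realising ballot paths\<close>

definition offset_set :: "nat \<Rightarrow> (nat \<Rightarrow> nat) \<Rightarrow> nat set" where
  "offset_set r d = (\<lambda>a. a + d a) ` {0..<r}"

lemma pick_offset_set:
  assumes "\<And>b c. b \<le> c \<Longrightarrow> c < r \<Longrightarrow> d b \<le> d c" and "a < r"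
  shows "pick (offset_set r d) a = a + d a"
  unfolding offset_set_def
proof (rule pick_image_strict_mono[OF _ assms(2)])
  fix x y :: nat assume "x < y" "y < r"
  then show "x + d x < y + d y" using assms(1)[of x y] by simp
qed

lemma offset_set_in_rsubsets:
  assumes mono: "\<And>b c. b \<le> c \<Longrightarrow> c < r \<Longrightarrow> d b \<le> d c" and bound: "\<And>a. a < r \<Longrightarrow> a + d a < n"
  shows "offset_set r d \<in> rsubsets n r"
proof -
  have "inj_on (\<lambda>a. a + d a) {0..<r}"
  proof (rule inj_onI)
    fix x y assume "x \<in> {0..<r}" "y \<in> {0..<r}" "x + d x = y + d y"
    then show "x = y"
      using mono[of x y] mono[of y x] by (cases x y rule: linorder_cases) auto
  qed
  then show ?thesis unfolding rsubsets_def offset_set_def using bound card_image by fastforce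
qed

lemma rsubsets_eq_offset_set:
  assumes "U \<in> rsubsets n r" and "\<And>b. b < r \<Longrightarrow> pick U b = b + d b"
  shows "U = offset_set r d"
proof -
  have "offset_set r d = pick U ` {0..<r}" unfolding offset_set_def using assms(2) by (intro image_cong) auto
  then show ?thesis using pick_rsubsets_image[OF assms(1)] by simp
qed

text \<open>Between the nodes \<open>node p q\<close> (\<open>q \<le> p \<le> k\<close>, with offset sequences \<open>D p q\<close>) the unit covers are
  exactly the ballot steps \<open>(p, q) \<rightarrow> (p + 1, q), (p, q + 1)\<close>, and by \<open>offsets_lower\<close> whatever a
  node unit covers is again a node, so chains of unit covers ending in a node never leave the family.\<close>

locale ballot_family =
  fixes n r k :: nat and D :: "nat \<Rightarrow> nat \<Rightarrow> nat \<Rightarrow> nat"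
  assumes offsets_mono: "\<And>p q b c. q \<le> p \<Longrightarrow> p \<le> k \<Longrightarrow> b \<le> c \<Longrightarrow> c < r \<Longrightarrow> D p q b \<le> D p q c"
    and offsets_bound: "\<And>p q a. q \<le> p \<Longrightarrow> p \<le> k \<Longrightarrow> a < r \<Longrightarrow> a + D p q a < n"
    and offsets_sum: "\<And>p q. q \<le> p \<Longrightarrow> p \<le> k \<Longrightarrow> (\<Sum>a<r. D p q a) = p + q"
    and offsets_step_fst: "\<And>p q a. q \<le> p \<Longrightarrow> p < k \<Longrightarrow> a < r \<Longrightarrow>
      D p q a \<le> D (Suc p) q a \<and> D (Suc p) q a \<le> Suc (D p q a)"
    and offsets_step_snd: "\<And>p q a. q < p \<Longrightarrow> p \<le> k \<Longrightarrow> a < r \<Longrightarrow>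
      D p q a \<le> D p (Suc q) a \<and> D p (Suc q) a \<le> Suc (D p q a)"
    and offsets_lower: "\<And>p q a. q \<le> p \<Longrightarrow> p \<le> k \<Longrightarrow> a < r \<Longrightarrow> 1 \<le> D p q a \<Longrightarrow>
      (\<And>b c. b \<le> c \<Longrightarrow> c < r \<Longrightarrow>
        D p q b - (if b = a then 1 else 0) \<le> D p q c - (if c = a then 1 else 0)) \<Longrightarrow>
      (0 < q \<and> (\<forall>b<r. D p q b - (if b = a then 1 else 0) = D p (q - 1) b)) \<or>
      (q < p \<and> (\<forall>b<r. D p q b - (if b = a then 1 else 0) = D (p - 1) q b))"
    and offsets_inj: "\<And>p q p' q'. q \<le> p \<Longrightarrow> p \<le> k \<Longrightarrow> q' \<le> p' \<Longrightarrow> p' \<le> k \<Longrightarrow>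
      (\<forall>a<r. D p q a = D p' q' a) \<Longrightarrow> p = p' \<and> q = q'"
begin

definition node :: "nat \<Rightarrow> nat \<Rightarrow> nat set" where
  "node p q = offset_set r (D p q)"

definition nodes :: "nat set set" where
  "nodes = {node p q | p q. q \<le> p \<and> p \<le> k}"

lemma node_in_nodes: "q \<le> p \<Longrightarrow> p \<le> k \<Longrightarrow> node p q \<in> nodes"
  unfolding nodes_def by blast

lemma node_in_rsubsets: "q \<le> p \<Longrightarrow> p \<le> k \<Longrightarrow> node p q \<in> rsubsets n r"
  unfolding node_def by (rule offset_set_in_rsubsets) (use offsets_mono offsets_bound in auto)

lemma pick_node: "q \<le> p \<Longrightarrow> p \<le> k \<Longrightarrow> a < r \<Longrightarrow> pick (node p q) a = a + D p q a"
  unfolding node_def by (rule pick_offset_set) (use offsets_mono in auto)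

lemma weight_node: "q \<le> p \<Longrightarrow> p \<le> k \<Longrightarrow> weight r (node p q) = (\<Sum>a<r. a) + (p + q)"
  using pick_node offsets_sum by (simp add: weight_def sum.distrib)

lemma node_inj:
  assumes "q \<le> p" "p \<le> k" "q' \<le> p'" "p' \<le> k" and "node p q = node p' q'"
  shows "p = p' \<and> q = q'"
  using offsets_inj[OF assms(1-4)] pick_node[OF assms(1,2)] pick_node[OF assms(3,4)] assms(5) by simp

lemma unit_covers_node_lower:
  assumes U: "U \<in> rsubsets n r" and pq: "q \<le> p" "p \<le> k" and cover: "node p q \<in> unit_covers n r U"
  shows "(0 < q \<and> U = node p (q - 1)) \<or> (q < p \<and> U = node (p - 1) q)"
proof -
  obtain a where a: "a < r"
    and shift: "\<And>b. b < r \<Longrightarrow> pick (node p q) b = pick U b + (if b = a then 1 else 0)"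
    using unit_covers_shift_one[OF cover] by blast
  define d where "d b = D p q b - (if b = a then 1 else 0)" for b
  have pick_U: "pick U b = b + d b" if "b < r" for b
    using shift[OF that] pick_node[OF pq that] pick_rsubsets_gap[OF U, of 0 b] that
    unfolding d_def by auto
  have "1 \<le> D p q a" using shift[OF a] pick_node[OF pq a] pick_rsubsets_gap[OF U, of 0 a] a by simp
  moreover have "d b \<le> d c" if "b \<le> c" "c < r" for b c
    using pick_rsubsets_gap[OF U that] pick_U[of b] pick_U[of c] that by simp
  ultimately have "(0 < q \<and> (\<forall>b<r. d b = D p (q - 1) b)) \<or> (q < p \<and> (\<forall>b<r. d b = D (p - 1) q b))"
    using offsets_lower[OF pq a] unfolding d_def by blast
  then show ?thesis
    using rsubsets_eq_offset_set[OF U] pick_U unfolding node_def by auto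
qed

lemma node_unit_covers_fst:
  assumes "q \<le> p" "p < k"
  shows "node (Suc p) q \<in> unit_covers n r (node p q)"
proof -
  have "node p q \<noteq> node (Suc p) q" using node_inj[of q p q "Suc p"] assms by auto
  then show ?thesis
    using assms offsets_step_fst[OF assms] pick_node[of q p] pick_node[of q "Suc p"]
      node_in_rsubsets[of q "Suc p"] weight_node[of q p] weight_node[of q "Suc p"]
    unfolding unit_covers_def covered_by_def by auto
qed

lemma node_unit_covers_snd:
  assumes "q < p" "p \<le> k"
  shows "node p (Suc q) \<in> unit_covers n r (node p q)"
proof -
  have "node p q \<noteq> node p (Suc q)" using node_inj[of q p "Suc q" p] assms by auto
  then show ?thesis
    using assms offsets_step_snd[OF assms] pick_node[of q p] pick_node[of "Suc q" p]
      node_in_rsubsets[of "Suc q" p] weight_node[of q p] weight_node[of "Suc q" p]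
    unfolding unit_covers_def covered_by_def by auto
qed

lemma unit_covers_node_inter_nodes:
  assumes "q \<le> p" "p \<le> k"
  shows "unit_covers n r (node p q) \<inter> nodes =
    (if p < k then {node (Suc p) q} else {}) \<union> (if q < p then {node p (Suc q)} else {})"
proof (intro equalityI subsetI)
  fix V assume "V \<in> unit_covers n r (node p q) \<inter> nodes"
  then obtain p' q' where V: "V = node p' q'" "q' \<le> p'" "p' \<le> k"
    and cover: "node p' q' \<in> unit_covers n r (node p q)"
    unfolding nodes_def by auto
  from unit_covers_node_lower[OF node_in_rsubsets[OF assms] V(2,3) cover]
  show "V \<in> (if p < k then {node (Suc p) q} else {}) \<union> (if q < p then {node p (Suc q)} else {})"
  proof (elim disjE conjE)
    assume "0 < q'" "node p q = node p' (q' - 1)"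
    then show ?thesis using node_inj[of q p "q' - 1" p'] assms V by auto
  next
    assume "q' < p'" "node p q = node (p' - 1) q'"
    then show ?thesis using node_inj[of q p q' "p' - 1"] assms V by auto
  qed
next
  fix V assume V: "V \<in> (if p < k then {node (Suc p) q} else {}) \<union> (if q < p then {node p (Suc q)} else {})"
  show "V \<in> unit_covers n r (node p q) \<inter> nodes"
  proof (cases "p < k \<and> V = node (Suc p) q")
    case True
    then show ?thesis using node_unit_covers_fst[OF assms(1)] node_in_nodes[of q "Suc p"] assms(1) by auto
  next
    case False
    then have "q < p" "V = node p (Suc q)" using V by (auto split: if_splits)
    then show ?thesis using node_unit_covers_snd[OF _ assms(2)] node_in_nodes[of "Suc q" p] assms(2) by auto
  qed
qed

end

context ballot_family
begin

lemma iterate_vanish_off_nodes: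
  assumes "U \<notin> nodes" and "weight r U + j = weight r (node k k)"
  shows "(ext_pow_op_minus_one r (jordan_block n (1::'a::comm_ring_1)) ^^ j) (\<lambda>S. of_bool (S = node k k)) U = 0"
  using assms
proof (induction j arbitrary: U)
  case 0
  then show ?case using node_in_nodes[of k k] by auto
next
  case (Suc j)
  show ?case
  proof (cases "U \<in> rsubsets n r")
    case True
    have off_nodes: "V \<notin> nodes" if V: "V \<in> unit_covers n r U" for V
    proof
      assume "V \<in> nodes"
      then obtain p q where pq: "q \<le> p" "p \<le> k" and "V = node p q" unfolding nodes_def by blast
      then have "U \<in> nodes"
        using unit_covers_node_lower[OF True pq] V node_in_nodes[of "q - 1" p] node_in_nodes[of q "p - 1"]
        by auto
      with Suc.prems(1) show False ..
    qed
    have weight_V: "weight r V + j = weight r (node k k)" if "V \<in> unit_covers n r U" for V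
      using that Suc.prems(2) unfolding unit_covers_def by simp
    show ?thesis
      unfolding jordan_block_iterate_step[OF True Suc.prems(2)]
      by (intro sum.neutral ballI Suc.IH off_nodes weight_V)
  qed (simp add: ext_pow_op_minus_one_def ext_pow_op_def)
qed

lemma iterate_step_at_node:
  assumes pq: "q \<le> p" "p \<le> k" and j: "p + q + Suc j = 2 * k"
  defines "N \<equiv> ext_pow_op_minus_one r (jordan_block n (1::'a::comm_ring_1))"
    and "e \<equiv> \<lambda>S. of_bool (S = node k k) :: 'a"
  shows "(N ^^ Suc j) e (node p q) =
    (if p < k then (N ^^ j) e (node (Suc p) q) else 0) + (if q < p then (N ^^ j) e (node p (Suc q)) else 0)"
proof -
  define S1 where "S1 = (if p < k then {node (Suc p) q} else {})"
  define S2 where "S2 = (if q < p then {node p (Suc q)} else {})"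
  have covers: "unit_covers n r (node p q) \<inter> nodes = S1 \<union> S2"
    unfolding S1_def S2_def by (rule unit_covers_node_inter_nodes[OF pq])
  have w: "weight r (node p q) + Suc j = weight r (node k k)"
    using weight_node[OF pq] weight_node[of k k] j by simp
  have "(N ^^ Suc j) e (node p q) = (\<Sum>V\<in>unit_covers n r (node p q). (N ^^ j) e V)"
    unfolding N_def e_def by (rule jordan_block_iterate_step[OF node_in_rsubsets[OF pq] w])
  also have "\<dots> = (\<Sum>V\<in>S1 \<union> S2. (N ^^ j) e V)"
  proof (rule sum.mono_neutral_right)
    show "finite (unit_covers n r (node p q))" unfolding unit_covers_def using finite_rsubsets by simp
    show "S1 \<union> S2 \<subseteq> unit_covers n r (node p q)" using covers by blast
    show "\<forall>V\<in>unit_covers n r (node p q) - (S1 \<union> S2). (N ^^ j) e V = 0"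
    proof
      fix V assume V: "V \<in> unit_covers n r (node p q) - (S1 \<union> S2)"
      then have "V \<notin> nodes" using covers by blast
      moreover have "weight r V + j = weight r (node k k)" using V w unfolding unit_covers_def by simp
      ultimately show "(N ^^ j) e V = 0" unfolding N_def e_def by (rule iterate_vanish_off_nodes)
    qed
  qed
  also have "\<dots> = (\<Sum>V\<in>S1. (N ^^ j) e V) + (\<Sum>V\<in>S2. (N ^^ j) e V)"
  proof (rule sum.union_disjoint)
    show "S1 \<inter> S2 = {}" using node_inj[of q "Suc p" "Suc q" p] pq unfolding S1_def S2_def by auto
  qed (simp_all add: S1_def S2_def)
  finally show ?thesis unfolding S1_def S2_def by simp
qed

lemma iterate_at_node:
  assumes "q \<le> p" "p \<le> k" "p + q + j = 2 * k"
  shows "(ext_pow_op_minus_one r (jordan_block n (1::'a::comm_ring_1)) ^^ j) (\<lambda>S. of_bool (S = node k k)) (node p q)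
    = of_nat (ballot (k - q) (k - p))"
  using assms
proof (induction j arbitrary: p q)
  case 0
  then have "p = k" "q = k" by auto
  then show ?case by simp
next
  case (Suc j)
  let ?N = "ext_pow_op_minus_one r (jordan_block n (1::'a))"
  let ?e = "\<lambda>S. of_bool (S = node k k) :: 'a"
  have "ballot (k - q) (k - p) = (if 0 < k - p then ballot (k - q) (k - p - 1) else 0) +
      (if k - p < k - q then ballot (k - q - 1) (k - p) else 0)"
    by (rule ballot_rec) (use Suc.prems in simp_all)
  then have "ballot (k - q) (k - p) =
      (if p < k then ballot (k - q) (k - Suc p) else 0) + (if q < p then ballot (k - Suc q) (k - p) else 0)"
    using Suc.prems(1,2) by (simp add: Suc_diff_Suc diff_less_mono2)
  moreover have "(?N ^^ j) ?e (node (Suc p) q) = of_nat (ballot (k - q) (k - Suc p))" if "p < k"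
    using Suc.prems that by (intro Suc.IH) simp_all
  moreover have "(?N ^^ j) ?e (node p (Suc q)) = of_nat (ballot (k - Suc q) (k - p))" if "q < p"
    using Suc.prems that by (intro Suc.IH) simp_all
  ultimately show ?case unfolding iterate_step_at_node[OF Suc.prems] by simp
qed

lemma jordan_block_iterate_nonzero:
  assumes "(of_nat (ballot k k) :: 'a::comm_ring_1) \<noteq> 0"
  shows "\<exists>x. rsubsets_supported n r x \<and>
    (ext_pow_op_minus_one r (jordan_block n (1::'a)) ^^ (2 * k)) x \<noteq> (\<lambda>_. 0)"
proof (intro exI conjI)
  let ?x = "\<lambda>S. of_bool (S = node k k) :: 'a"
  show "rsubsets_supported n r ?x"
    using node_in_rsubsets[of k k] unfolding rsubsets_supported_def by auto
  have "(ext_pow_op_minus_one r (jordan_block n (1::'a)) ^^ (2 * k)) ?x (node 0 0) = of_nat (ballot k k)"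
    using iterate_at_node[of 0 0 "2 * k"] by simp
  then show "(ext_pow_op_minus_one r (jordan_block n (1::'a)) ^^ (2 * k)) ?x \<noteq> (\<lambda>_. 0)"
    using assms by (metis (mono_tags))
qed

end


text \<open>Read as partitions, the offsets of \<open>node p q\<close> form the two-row diagram \<open>(p, q)\<close> in the first
  family and its transpose, the two-column diagram, in the second; each must fit into the
  \<open>r \<times> (n - r)\<close> box, which is where the case split \<open>r \<le> k\<close> / \<open>k \<le> r\<close> comes from.\<close>

definition two_row_offsets :: "nat \<Rightarrow> nat \<Rightarrow> nat \<Rightarrow> nat \<Rightarrow> nat" where
  "two_row_offsets r p q a = (if a = r - 1 then p else if a = r - 2 then q else 0)"

definition two_column_offsets :: "nat \<Rightarrow> nat \<Rightarrow> nat \<Rightarrow> nat \<Rightarrow> nat" where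
  "two_column_offsets r p q a = (if r - p \<le> a then 1 else 0) + (if r - q \<le> a then 1 else 0)"

lemma ballot_family_two_row_offsets:
  assumes r: "2 \<le> r" "r \<le> k" and n: "n = 2 * k"
  shows "ballot_family n r k (two_row_offsets r)"
proof
  fix p q :: nat assume "q \<le> p" "p \<le> k"
  obtain m where m: "r = Suc (Suc m)" using r by (metis add_2_eq_Suc le_Suc_ex)
  have "(\<Sum>a<m. two_row_offsets r p q a) = 0" unfolding two_row_offsets_def m by simp
  then show "(\<Sum>a<r. two_row_offsets r p q a) = p + q" unfolding m by (simp add: two_row_offsets_def m)
next
  fix p q a
  assume pq: "q \<le> p" "p \<le> k" and a: "a < r" and pos: "1 \<le> two_row_offsets r p q a"
    and mono: "\<And>b c. b \<le> c \<Longrightarrow> c < r \<Longrightarrow>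
      two_row_offsets r p q b - (if b = a then 1 else 0) \<le> two_row_offsets r p q c - (if c = a then 1 else 0)"
  have ne: "r - 1 \<noteq> r - 2" using r by simp
  show "(0 < q \<and> (\<forall>b<r. two_row_offsets r p q b - (if b = a then 1 else 0) = two_row_offsets r p (q - 1) b)) \<or>
        (q < p \<and> (\<forall>b<r. two_row_offsets r p q b - (if b = a then 1 else 0) = two_row_offsets r (p - 1) q b))"
  proof (cases "a = r - 2")
    case True
    then show ?thesis using pos ne unfolding two_row_offsets_def by auto
  next
    case False
    then have a1: "a = r - 1" using pos unfolding two_row_offsets_def by (auto split: if_splits)
    then have "q \<le> p - 1" using mono[of "r - 2" "r - 1"] r ne unfolding two_row_offsets_def by simp
    then show ?thesis using pos a1 ne unfolding two_row_offsets_def by auto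
  qed
next
  fix p q p' q' assume "\<forall>a<r. two_row_offsets r p q a = two_row_offsets r p' q' a"
  then have "two_row_offsets r p q (r - 1) = two_row_offsets r p' q' (r - 1)"
    "two_row_offsets r p q (r - 2) = two_row_offsets r p' q' (r - 2)" using r by auto
  moreover have "r - 2 \<noteq> r - 1" using r by simp
  ultimately show "p = p' \<and> q = q'" unfolding two_row_offsets_def by auto
qed (use r n in \<open>auto simp: two_row_offsets_def\<close>)

lemma sum_lessThan_tail_indicator: "p \<le> r \<Longrightarrow> (\<Sum>a<r. (if r - p \<le> a then 1 else 0 :: nat)) = p"
proof -
  assume "p \<le> r"
  moreover have "{a \<in> {..<r}. r - p \<le> a} = {r - p..<r}" by auto
  ultimately show ?thesis by (simp flip: sum.inter_filter)
qed

lemma two_column_offsets_lower: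
  fixes r p q a :: nat
  assumes pq: "q \<le> p" "p \<le> r" and a: "a < r" and pos: "1 \<le> two_column_offsets r p q a"
  defines "d \<equiv> \<lambda>b. two_column_offsets r p q b - (if b = a then 1 else 0)"
  assumes mono: "\<And>b c. b \<le> c \<Longrightarrow> c < r \<Longrightarrow> d b \<le> d c"
  shows "(0 < q \<and> (\<forall>b<r. d b = two_column_offsets r p (q - 1) b)) \<or>
    (q < p \<and> (\<forall>b<r. d b = two_column_offsets r (p - 1) q b))"
proof -
  have "r - p \<le> a" using pos pq unfolding two_column_offsets_def by (auto split: if_splits)
  \<comment> \<open>only the top box of a column can be removed\<close>
  have "a = r - q \<or> a = r - p"
  proof (rule ccontr)
    assume "\<not> (a = r - q \<or> a = r - p)"
    then show False
      using mono[of "a - 1" a] a \<open>r - p \<le> a\<close> pq unfolding d_def two_column_offsets_def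
      by (auto split: if_splits)
  qed
  then consider "a = r - q" | "a = r - p" "q = p" | "a = r - p" "q < p" using pq by linarith
  then show ?thesis
  proof cases
    case 1
    then show ?thesis using a pq unfolding d_def two_column_offsets_def by auto
  next
    case 2
    then show ?thesis using a pq unfolding d_def two_column_offsets_def by auto
  next
    case 3
    then have "\<forall>b<r. d b = two_column_offsets r (p - 1) q b"
      using a pq unfolding d_def two_column_offsets_def by auto
    with 3 show ?thesis by blast
  qed
qed

lemma ballot_family_two_column_offsets:
  assumes kr: "k \<le> r" and rn: "r + 2 \<le> n"
  shows "ballot_family n r k (two_column_offsets r)"
proof
  fix p q b c :: nat assume "b \<le> c"
  then show "two_column_offsets r p q b \<le> two_column_offsets r p q c"
    unfolding two_column_offsets_def by simp
next
  fix p q a :: nat assume "a < r"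
  then show "a + two_column_offsets r p q a < n"
    unfolding two_column_offsets_def using rn by simp
next
  fix p q a :: nat assume "p < k"
  then show "two_column_offsets r p q a \<le> two_column_offsets r (Suc p) q a \<and>
      two_column_offsets r (Suc p) q a \<le> Suc (two_column_offsets r p q a)"
    unfolding two_column_offsets_def using kr by auto
next
  fix p q a :: nat assume "q < p" "p \<le> k"
  then show "two_column_offsets r p q a \<le> two_column_offsets r p (Suc q) a \<and>
      two_column_offsets r p (Suc q) a \<le> Suc (two_column_offsets r p q a)"
    unfolding two_column_offsets_def using kr by auto
next
  fix p q :: nat assume "q \<le> p" "p \<le> k"
  then show "(\<Sum>a<r. two_column_offsets r p q a) = p + q"
    unfolding two_column_offsets_def using kr by (simp add: sum.distrib sum_lessThan_tail_indicator)
next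
  fix p q a :: nat
  assume pq: "q \<le> p" "p \<le> k" and a: "a < r" and pos: "1 \<le> two_column_offsets r p q a"
    and mono: "\<And>b c. b \<le> c \<Longrightarrow> c < r \<Longrightarrow>
      two_column_offsets r p q b - (if b = a then 1 else 0) \<le> two_column_offsets r p q c - (if c = a then 1 else 0)"
  have "p \<le> r" using pq kr by simp
  then show "(0 < q \<and> (\<forall>b<r. two_column_offsets r p q b - (if b = a then 1 else 0) = two_column_offsets r p (q - 1) b)) \<or>
      (q < p \<and> (\<forall>b<r. two_column_offsets r p q b - (if b = a then 1 else 0) = two_column_offsets r (p - 1) q b))"
    by (rule two_column_offsets_lower[OF pq(1) _ a pos mono])
next
  fix p q p' q' assume pq: "q \<le> p" "p \<le> k" "q' \<le> p'" "p' \<le> k"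
    and eq: "\<forall>a<r. two_column_offsets r p q a = two_column_offsets r p' q' a"
  have "p = p'"
    using eq[rule_format, of "r - max p p'"] pq kr unfolding two_column_offsets_def
    by (cases p p' rule: linorder_cases) (auto split: if_splits)
  moreover have "q = q'"
    using eq[rule_format, of "r - max q q'"] pq kr \<open>p = p'\<close> unfolding two_column_offsets_def
    by (cases q q' rule: linorder_cases) (auto split: if_splits)
  ultimately show "p = p' \<and> q = q'" ..
qed

theorem lemma3p10:
  fixes A :: "'a :: field mat" and l r :: nat
  assumes "prime l" and "l \<ge> 5" and "CHAR('a) = l"
    and "A \<in> carrier_mat (l - 1) (l - 1)"
    and "similar_mat A (jordan_block (l - 1) 1)"
    and "2 \<le> r" and "r \<le> l - 3"
  shows "\<exists>v. (\<forall>S. S \<notin> rsubsets (l - 1) r \<longrightarrow> v S = 0) \<and>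
             (ext_pow_op_minus_one r A ^^ (l - 1)) v \<noteq> (\<lambda>_. 0)"
proof -
  have "odd l" using prime_odd_nat[OF assms(1)] assms(2) by simp
  then obtain k where "l = 2 * k + 1" by (rule oddE)
  then have k: "2 * k = l - 1" by simp
  have "ballot_family (l - 1) r k (two_row_offsets r)" if "r \<le> k"
    using ballot_family_two_row_offsets[OF assms(6) that k[symmetric]] .
  moreover have "ballot_family (l - 1) r k (two_column_offsets r)" if "\<not> r \<le> k"
    using ballot_family_two_column_offsets[of k r "l - 1"] that assms(2,7) by simp
  ultimately obtain D where D: "ballot_family (l - 1) r k D" by (cases "r \<le> k") blast+
  obtain x where x: "rsubsets_supported (l - 1) r x"
    and "(ext_pow_op_minus_one r (jordan_block (l - 1) (1::'a)) ^^ (2 * k)) x \<noteq> (\<lambda>_. 0)"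
    using ballot_family.jordan_block_iterate_nonzero[OF D of_nat_ballot_diagonal_nonzero[OF assms(1,3,2) k]]
    by blast
  then show ?thesis
    using ext_pow_op_minus_one_pow_nonzero_if_similar[OF assms(4,5) x] k
    unfolding rsubsets_supported_def by simp
qed

end
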